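(* For $n\ge1$ and integers $i,j$ let $B_{n,i,j}=|\{w\in \mathrm{B}_n: \operatorname{des}(w)=i,\ \operatorname{des}(w^{-1})=j\}|$, with $B_{n,i,j}=0$ if $i<0$ or $j<0$ (and $B_{0,0,0}=1$). Then for all $n\ge 1$ and all $i,j$: $$nB_{n,i,j}=(n+i+j+2ij)B_{n-1,i,j}+(1-i+(2n+1)j-2ij)B_{n-1,i-1,j}+(1-j+(2n+1)i-2ij)B_{n-1,i,j-1}+\big(n(2n+3)-(2n+1)i-(2n+1)j+2ij\big)B_{n-1,i-1,j-1}.$$
   Context: $\mathrm{B}_n$ is the hyperoctahedral group (signed permutations) with its standard Coxeter generators $S$; $\operatorname{des}(w)=|\{s\in S: l_S(ws)<l_S(w)\}|$ with $l_S$ the word length. *)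

theory Defs
  imports "HOL-Combinatorics.Combinatorics"
begin

text \<open>The hyperoctahedral group B_n: signed permutations of {-n..n} (fixing 0),
  i.e. bijections w of the integers with w(-x) = -w(x) that fix everything outside
  {-n..n}.\<close>

definition signed_perms :: "nat \<Rightarrow> (int \<Rightarrow> int) set" where
  "signed_perms n = {w. w permutes {- int n .. int n} \<and> (\<forall>x. w (- x) = - w x)}"

definition gen0 :: "int \<Rightarrow> int" where
  "gen0 = transpose 1 (-1)"

definition gen :: "int \<Rightarrow> int \<Rightarrow> int" where
  "gen i = transpose i (i + 1) \<circ> transpose (- i) (- (i + 1))"

definition coxeter_gens :: "nat \<Rightarrow> (int \<Rightarrow> int) set" where
  "coxeter_gens n = (if n = 0 then {} else {gen0} \<union> {gen (int i) | i. 1 \<le> i \<and> i < n})"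

definition coxeter_length :: "nat \<Rightarrow> (int \<Rightarrow> int) \<Rightarrow> nat" where
  "coxeter_length n w =
     (LEAST k. \<exists>ws. length ws = k \<and> set ws \<subseteq> coxeter_gens n \<and> foldr (\<circ>) ws id = w)"

definition des :: "nat \<Rightarrow> (int \<Rightarrow> int) \<Rightarrow> nat" where
  "des n w = card {s \<in> coxeter_gens n. coxeter_length n (w \<circ> s) < coxeter_length n w}"

text \<open>B_{n,i,j}; automatically 0 for negative i or j.\<close>

definition Bnum :: "nat \<Rightarrow> int \<Rightarrow> int \<Rightarrow> int" where
  "Bnum n i j = int (card {w \<in> signed_perms n. int (des n w) = i \<and> int (des n (inv w)) = j})"

end

theory Submission
  imports Defs
begin

text \<open>
  The argument is the P-partition proof for two-sided Eulerian numbers, transferred to type B.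
  Counting inversions of w on all of -n, ..., n and subtracting the number of negative entries
  gives twice the Coxeter length; hence the descents of w are the positions 0 \<le> p < n with
  w (p + 1) < w p, where w 0 = 0.

  Let c_n(t) = C(t + n, n) be the number of chains 0 \<le> f 1 \<le> ... \<le> f n \<le> t. Stably sorting
  the odd extension of a function x on 1, ..., n with values in [-k, k] decomposes x into a signed
  permutation w and a chain compatible with the descents of w, whose descents in turn are those of
  the inverse of w; writing a pair of such chains in base 2k + 1 with balanced digits gives,
  for k, l \<ge> 0,
    \<Sum>w. c_n(k - des w) c_n(l - des w\<inverse>) = c_n(2kl + k + l).
  Multiplying the identity for n - 1 by 2kl + k + l + n and expanding with the Pascal-type
  rules for c_n produces the identity for n with coefficients given by the right-hand side of
  the recurrence; as the products c_n(k - i) c_n(l - j) are unitriangular in (i, j), the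
  coefficients agree.
\<close>

abbreviation signed_interval :: "nat \<Rightarrow> int set" where
  "signed_interval n \<equiv> {- int n .. int n}"

section \<open>Signed permutations\<close>

lemma signed_perms_permutes: "w \<in> signed_perms n \<Longrightarrow> w permutes signed_interval n"
  by (simp add: signed_perms_def)

lemma signed_perms_odd: "w \<in> signed_perms n \<Longrightarrow> w (- x) = - w x"
  by (simp add: signed_perms_def)

lemma signed_perms_zero: "w \<in> signed_perms n \<Longrightarrow> w 0 = 0"
  using signed_perms_odd[of w n 0] by simp

lemma signed_perms_in: "w \<in> signed_perms n \<Longrightarrow> x \<in> signed_interval n \<Longrightarrow> w x \<in> signed_interval n"
  using permutes_in_image[OF signed_perms_permutes] by blast

lemma signed_perms_fixpoint: "w \<in> signed_perms n \<Longrightarrow> x \<notin> signed_interval n \<Longrightarrow> w x = x"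
  using permutes_not_in[OF signed_perms_permutes] by blast

lemma signed_perms_inj: "w \<in> signed_perms n \<Longrightarrow> inj w"
  using signed_perms_permutes permutes_inj by blast

lemma signed_perms_eq_iff: "w \<in> signed_perms n \<Longrightarrow> w x = w y \<longleftrightarrow> x = y"
  using signed_perms_inj by (simp add: inj_eq)

lemma signed_perms_apply_inv: "w \<in> signed_perms n \<Longrightarrow> w (inv w x) = x"
  using permutes_inverses(1)[OF signed_perms_permutes] by blast

lemma signed_perms_inv_apply: "w \<in> signed_perms n \<Longrightarrow> inv w (w x) = x"
  using permutes_inverses(2)[OF signed_perms_permutes] by blast

lemma signed_perms_comp:
  assumes "w \<in> signed_perms n" "v \<in> signed_perms n"
  shows "w \<circ> v \<in> signed_perms n"
  using permutes_compose[OF signed_perms_permutes[OF assms(2)] signed_perms_permutes[OF assms(1)]]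
    signed_perms_odd[OF assms(1)] signed_perms_odd[OF assms(2)]
  by (simp add: signed_perms_def)

lemma signed_perms_inv:
  assumes w: "w \<in> signed_perms n"
  shows "inv w \<in> signed_perms n"
proof -
  have "inv w (- x) = - inv w x" for x
  proof -
    have "w (- inv w x) = - x"
      using signed_perms_odd[OF w, of "inv w x"] signed_perms_apply_inv[OF w, of x] by simp
    then show ?thesis using signed_perms_inv_apply[OF w, of "- inv w x"] by metis
  qed
  with permutes_inv[OF signed_perms_permutes[OF w]] show ?thesis
    by (simp add: signed_perms_def)
qed

lemma id_signed_perms: "id \<in> signed_perms n"
  by (simp add: signed_perms_def)

lemma finite_signed_perms: "finite (signed_perms n)"
  by (rule finite_subset[OF _ finite_permutations[of "signed_interval n"]])
     (auto simp: signed_perms_def)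

lemma gen0_signed_perms: "1 \<le> n \<Longrightarrow> gen0 \<in> signed_perms n"
  unfolding signed_perms_def gen0_def
  by (auto intro!: permutes_swap_id simp: transpose_def)

lemma gen_signed_perms: "1 \<le> i \<Longrightarrow> i < int n \<Longrightarrow> gen i \<in> signed_perms n"
  unfolding signed_perms_def gen_def
  by (auto intro!: permutes_compose permutes_swap_id simp: transpose_def)

lemma coxeter_gensE:
  assumes "s \<in> coxeter_gens n"
  obtains "1 \<le> n" "s = gen0" | i where "1 \<le> i" "i < int n" "s = gen i"
  using assms unfolding coxeter_gens_def
  by (auto split: if_splits)
    (metis Suc_le_eq int_one_le_iff_zero_less of_nat_0_less_iff of_nat_less_iff zero_less_iff_neq_zero)

lemma coxeter_gens_signed_perms: "s \<in> coxeter_gens n \<Longrightarrow> s \<in> signed_perms n"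
  by (erule coxeter_gensE) (auto intro: gen0_signed_perms gen_signed_perms)

lemma gen0_coxeter_gens: "1 \<le> n \<Longrightarrow> gen0 \<in> coxeter_gens n"
  by (simp add: coxeter_gens_def)

lemma gen_coxeter_gens: "1 \<le> i \<Longrightarrow> i < int n \<Longrightarrow> gen i \<in> coxeter_gens n"
  unfolding coxeter_gens_def by (auto intro!: exI[of _ "nat i"])

lemma gen0_involution: "gen0 \<circ> gen0 = id"
  unfolding gen0_def by (simp add: fun_eq_iff transpose_def)

lemma gen_involution: "1 \<le> i \<Longrightarrow> gen i \<circ> gen i = id"
  unfolding gen_def by (auto simp: fun_eq_iff transpose_def)

section \<open>The Coxeter length as an inversion statistic\<close>

definition inversions :: "int set \<Rightarrow> (int \<Rightarrow> int) \<Rightarrow> (int \<times> int) set" where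
  "inversions S w = {(a, b). a \<in> S \<and> b \<in> S \<and> a < b \<and> w b < w a}"

lemma finite_inversions: "finite S \<Longrightarrow> finite (inversions S w)"
  unfolding inversions_def by (rule finite_subset[of _ "S \<times> S"]) auto

lemma inversions_comp_transpose:
  fixes S :: "int set" and w :: "int \<Rightarrow> int"
  assumes p: "p \<in> S" "p + 1 \<in> S"
  defines "t \<equiv> transpose p (p + 1)"
  shows "inversions S (w \<circ> t) - {(p, p + 1)} = map_prod t t ` (inversions S w - {(p, p + 1)})"
proof -
  have tS: "x \<in> S \<Longrightarrow> t x \<in> S" for x using p by (auto simp: t_def transpose_def)
  have ord: "a < b \<Longrightarrow> (a, b) \<noteq> (p, p + 1) \<Longrightarrow> t a < t b" for a b
    by (auto simp: t_def transpose_def)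
  show ?thesis
  proof (intro equalityI subsetI)
    fix x assume x: "x \<in> inversions S (w \<circ> t) - {(p, p + 1)}"
    then obtain a b where ab: "x = (a, b)" by (cases x)
    have "(t a, t b) \<in> inversions S w - {(p, p + 1)}" using x ab ord[of a b] tS
      by (auto simp: inversions_def t_def transpose_def split: if_splits)
    moreover have "map_prod t t (t a, t b) = x" using ab by (simp add: t_def)
    ultimately show "x \<in> map_prod t t ` (inversions S w - {(p, p + 1)})" by (metis image_eqI)
  next
    fix x assume "x \<in> map_prod t t ` (inversions S w - {(p, p + 1)})"
    then obtain a b where ab: "(a, b) \<in> inversions S w - {(p, p + 1)}" "x = (t a, t b)" by auto
    then show "x \<in> inversions S (w \<circ> t) - {(p, p + 1)}" using ord[of a b] tS
      by (auto simp: inversions_def t_def transpose_def split: if_splits)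
  qed
qed

lemma card_inversions_comp_transpose:
  fixes S :: "int set" and w :: "int \<Rightarrow> int"
  assumes fin: "finite S" and inj: "inj_on w S" and p: "p \<in> S" "p + 1 \<in> S"
  shows "int (card (inversions S (w \<circ> transpose p (p + 1)))) =
         int (card (inversions S w)) + (if w p < w (p + 1) then 1 else -1)"
proof -
  let ?t = "transpose p (p + 1)"
  let ?A = "inversions S w" and ?B = "inversions S (w \<circ> ?t)"
  have "inj (map_prod ?t ?t)" by (rule injI) (auto simp: transpose_eq_iff)
  then have c: "card (?B - {(p, p + 1)}) = card (?A - {(p, p + 1)})"
    unfolding inversions_comp_transpose[OF p] by (simp add: card_image inj_on_subset)
  have finA: "finite ?A" "finite ?B" using fin finite_inversions by auto
  have "w p \<noteq> w (p + 1)" using inj p by (metis inj_on_def less_irrefl lessI zless_add1_eq)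
  then consider "w p < w (p + 1)" "(p, p + 1) \<notin> ?A" "(p, p + 1) \<in> ?B"
    | "\<not> w p < w (p + 1)" "(p, p + 1) \<in> ?A" "(p, p + 1) \<notin> ?B"
    using p by (force simp: inversions_def)
  then show ?thesis
  proof cases
    case 1
    then have "card ?B = Suc (card ?A)"
      using c card.remove[OF finA(2)] by (metis Diff_empty Diff_insert0)
    then show ?thesis using 1 by simp
  next
    case 2
    then have "card ?A = Suc (card ?B)"
      using c card.remove[OF finA(1)] by (metis Diff_empty Diff_insert0)
    then show ?thesis using 2 by simp
  qed
qed

definition ninv :: "nat \<Rightarrow> (int \<Rightarrow> int) \<Rightarrow> nat" where
  "ninv n w = card (inversions (signed_interval n) w)"

definition nneg :: "nat \<Rightarrow> (int \<Rightarrow> int) \<Rightarrow> nat" where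
  "nneg n w = card {a \<in> {1..int n}. w a < 0}"

definition double_length :: "nat \<Rightarrow> (int \<Rightarrow> int) \<Rightarrow> int" where
  "double_length n w = int (ninv n w) - int (nneg n w)"

lemma ninv_comp_transpose:
  assumes "inj w" "p \<in> signed_interval n" "p + 1 \<in> signed_interval n"
  shows "int (ninv n (w \<circ> transpose p (p + 1))) =
         int (ninv n w) + (if w p < w (p + 1) then 1 else -1)"
  unfolding ninv_def using card_inversions_comp_transpose[of "signed_interval n" w p] assms
  by (simp add: inj_on_subset)

lemma ninv_comp_gen:
  assumes w: "w \<in> signed_perms n" and i: "1 \<le> i" "i < int n"
  shows "int (ninv n (w \<circ> gen i)) = int (ninv n w) + (if w i < w (i + 1) then 2 else -2)"
proof -
  let ?t1 = "transpose i (i + 1)" and ?t2 = "transpose (- i - 1) (- i - 1 + 1)"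
  have inj: "inj w" "inj (w \<circ> ?t1)"
    using signed_perms_inj[OF w] by (simp_all add: inj_compose)
  have "gen i = ?t1 \<circ> ?t2" unfolding gen_def by (simp add: transpose_commute)
  then have "w \<circ> gen i = (w \<circ> ?t1) \<circ> ?t2" by (simp add: comp_assoc)
  moreover have "(w \<circ> ?t1) (- i - 1) = - w (i + 1)" "(w \<circ> ?t1) (- i - 1 + 1) = - w i"
    using i signed_perms_odd[OF w, of "i + 1"] signed_perms_odd[OF w, of i]
    by (simp_all add: transpose_def)
  ultimately show ?thesis
    using ninv_comp_transpose[OF inj(1), of i n] ninv_comp_transpose[OF inj(2), of "- i - 1" n] i
    by auto
qed

lemma ninv_comp_gen0:
  assumes w: "w \<in> signed_perms n" and n: "1 \<le> n"
  shows "int (ninv n (w \<circ> gen0)) = int (ninv n w) + (if 0 < w 1 then 3 else -3)"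
proof -
  let ?t = "transpose (-1) (-1 + 1)" and ?u = "transpose 0 (0 + 1)"
  have inj: "inj w" "inj (w \<circ> ?t)" "inj (w \<circ> ?t \<circ> ?u)"
    using signed_perms_inj[OF w] by (simp_all add: inj_compose)
  have "gen0 = ?t \<circ> ?u \<circ> ?t" unfolding gen0_def by (auto simp: transpose_def fun_eq_iff)
  then have e: "w \<circ> gen0 = w \<circ> ?t \<circ> ?u \<circ> ?t" by (simp add: comp_assoc)
  have S: "(-1::int) \<in> signed_interval n" "(-1 + 1::int) \<in> signed_interval n"
    "(0::int) \<in> signed_interval n" "(0 + 1::int) \<in> signed_interval n" using n by auto
  have w0: "w 0 = 0" and wm: "w (-1) = - w 1" and w1: "w 1 \<noteq> 0"
    using signed_perms_zero[OF w] signed_perms_odd[OF w, of 1] signed_perms_eq_iff[OF w, of 1 0]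
    by auto
  have v: "w (-1 + 1) = 0" "(w \<circ> ?t) 0 = - w 1" "(w \<circ> ?t) (0 + 1) = w 1"
    "(w \<circ> ?t \<circ> ?u) (-1) = 0" "(w \<circ> ?t \<circ> ?u) (-1 + 1) = w 1"
    using w0 wm by (simp_all add: transpose_def)
  show ?thesis unfolding e
    using ninv_comp_transpose[OF inj(1) S(1,2)] ninv_comp_transpose[OF inj(2) S(3,4)]
      ninv_comp_transpose[OF inj(3) S(1,2)] v wm w1
    by (cases "0 < w 1") simp_all
qed

lemma card_filter_involution:
  assumes "\<And>x. s (s x) = x" "\<And>x. x \<in> P \<Longrightarrow> s x \<in> P"
  shows "card {a \<in> P. Q (s a)} = card {a \<in> P. Q a}"
proof -
  have "{a \<in> P. Q (s a)} = s ` {a \<in> P. Q a}"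
    using assms by (auto intro!: image_eqI[of _ s "s _"])
  moreover have "inj s" using assms(1) by (metis injI)
  ultimately show ?thesis by (simp add: card_image inj_on_subset)
qed

lemma nneg_comp_gen:
  assumes i: "1 \<le> i" "i < int n"
  shows "nneg n (w \<circ> gen i) = nneg n w"
proof -
  have "gen i (gen i x) = x" for x using gen_involution[OF i(1)] by (metis comp_apply id_apply)
  moreover have "x \<in> {1..int n} \<Longrightarrow> gen i x \<in> {1..int n}" for x
    unfolding gen_def using i by (auto simp: transpose_def)
  ultimately show ?thesis
    unfolding nneg_def o_apply by (rule card_filter_involution[where Q = "\<lambda>a. w a < 0"])
qed

lemma nneg_comp_gen0:
  assumes w: "w \<in> signed_perms n" and n: "1 \<le> n"
  shows "int (nneg n (w \<circ> gen0)) = int (nneg n w) + (if 0 < w 1 then 1 else -1)"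
proof -
  have split: "nneg n v = card {a \<in> {2..int n}. v a < 0} + (if v 1 < 0 then 1 else 0)" for v
  proof -
    have "{1..int n} = insert 1 {2..int n}" using n by auto
    then have "{a \<in> {1..int n}. v a < 0} =
        {a \<in> {2..int n}. v a < 0} \<union> (if v 1 < 0 then {1} else {})"
      by auto
    moreover have "finite {a \<in> {2..int n}. v a < 0}"
      by (rule finite_subset[of _ "{2..int n}"]) auto
    ultimately show ?thesis unfolding nneg_def by (cases "v 1 < 0") simp_all
  qed
  have "{a \<in> {2..int n}. (w \<circ> gen0) a < 0} = {a \<in> {2..int n}. w a < 0}"
    by (auto simp: gen0_def transpose_def)
  moreover have "(w \<circ> gen0) 1 = - w 1"
    using signed_perms_odd[OF w, of 1] by (simp add: gen0_def)
  moreover have "w 1 \<noteq> 0"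
    using signed_perms_eq_iff[OF w, of 1 0] signed_perms_zero[OF w] by simp
  ultimately show ?thesis using split[of w] split[of "w \<circ> gen0"] by auto
qed

lemma double_length_comp_gen:
  assumes "w \<in> signed_perms n" "1 \<le> i" "i < int n"
  shows "double_length n (w \<circ> gen i) = double_length n w + (if w i < w (i + 1) then 2 else -2)"
  using ninv_comp_gen[OF assms] nneg_comp_gen[OF assms(2,3), of w] unfolding double_length_def
  by simp

lemma double_length_comp_gen0:
  assumes "w \<in> signed_perms n" "1 \<le> n"
  shows "double_length n (w \<circ> gen0) = double_length n w + (if 0 < w 1 then 2 else -2)"
  using ninv_comp_gen0[OF assms] nneg_comp_gen0[OF assms] unfolding double_length_def by simp

lemma double_length_comp_le:
  assumes "w \<in> signed_perms n" "s \<in> coxeter_gens n"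
  shows "double_length n (w \<circ> s) \<le> double_length n w + 2"
  using assms(2)
  by (cases rule: coxeter_gensE)
    (use double_length_comp_gen0 double_length_comp_gen assms(1) in auto)

lemma double_length_id: "double_length n id = 0"
proof -
  have "inversions (signed_interval n) id = {}" "{a \<in> {1..int n}. id a < 0} = {}"
    by (auto simp: inversions_def)
  then show ?thesis unfolding double_length_def ninv_def nneg_def by (simp only: card.empty)
qed

lemma foldr_comp_eq: "foldr (\<circ>) xs x = foldr (\<circ>) xs id \<circ> (x :: 'a \<Rightarrow> 'a)"
  by (induction xs) (simp_all add: fun_eq_iff)

lemma double_length_word_le:
  "set ws \<subseteq> coxeter_gens n \<Longrightarrow>
     foldr (\<circ>) ws id \<in> signed_perms n \<and> double_length n (foldr (\<circ>) ws id) \<le> 2 * int (length ws)"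
proof (induction ws rule: rev_induct)
  case Nil
  have "foldr (\<circ>) [] id = (id :: int \<Rightarrow> int)" by simp
  then show ?case
    using id_signed_perms double_length_id
    by (metis list.size(3) mult_zero_right of_nat_0 order_refl)
next
  case (snoc x xs)
  have x: "x \<in> coxeter_gens n" and "set xs \<subseteq> coxeter_gens n" using snoc.prems by auto
  then have xs: "foldr (\<circ>) xs id \<in> signed_perms n"
      "double_length n (foldr (\<circ>) xs id) \<le> 2 * int (length xs)"
    using snoc.IH by blast+
  have e: "foldr (\<circ>) (xs @ [x]) id = foldr (\<circ>) xs id \<circ> x"
    using foldr_comp_eq[of xs x] by simp
  have "double_length n (foldr (\<circ>) xs id \<circ> x) \<le> 2 * int (length (xs @ [x]))"
    using double_length_comp_le[OF xs(1) x] xs(2) by simp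
  then show ?case
    unfolding e using signed_perms_comp[OF xs(1) coxeter_gens_signed_perms[OF x]] by blast
qed

lemma int_seq_diff_ge:
  fixes f :: "nat \<Rightarrow> int"
  assumes "\<And>i. i < m \<Longrightarrow> f i < f (Suc i)"
  shows "i \<le> j \<Longrightarrow> j \<le> m \<Longrightarrow> f j - f i \<ge> int (j - i)"
proof (induction j)
  case (Suc j)
  show ?case
  proof (cases "i \<le> j")
    case True
    then show ?thesis using Suc assms[of j] by (simp add: Suc_diff_le)
  qed (use Suc in \<open>simp add: le_Suc_eq\<close>)
qed simp

lemma signed_perm_no_descent_eq_id:
  assumes w: "w \<in> signed_perms n" and asc: "\<And>p. 0 \<le> p \<Longrightarrow> p < int n \<Longrightarrow> w p < w (p + 1)"
  shows "w = id"
proof -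
  let ?f = "\<lambda>k::nat. w (int k)"
  have inc: "?f i < ?f (Suc i)" if "i < n" for i
    using asc[of "int i"] that by (simp add: add.commute)
  \<comment> \<open>An increasing map from 0, ..., n into -n, ..., n that fixes 0 has to be the identity.\<close>
  have pos: "w (int k) = int k" if "k \<le> n" for k
  proof -
    have "?f k - ?f 0 \<ge> int k" "?f n - ?f k \<ge> int (n - k)"
      using int_seq_diff_ge[where f = ?f and m = n, OF inc, of 0 k]
        int_seq_diff_ge[where f = ?f and m = n, OF inc, of k n] that by simp_all
    then show ?thesis using signed_perms_in[OF w, of "int n"] signed_perms_zero[OF w] that by simp
  qed
  show ?thesis
  proof
    fix x
    consider "x \<notin> signed_interval n" | "0 \<le> x" "x \<le> int n" | "x < 0" "- x \<le> int n"
      by force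
    then show "w x = id x"
    proof cases
      case 1 then show ?thesis using signed_perms_fixpoint[OF w] by simp
    next
      case 2 then show ?thesis using pos[of "nat x"] by simp
    next
      case 3 then show ?thesis using pos[of "nat (- x)"] signed_perms_odd[OF w, of "- x"] by simp
    qed
  qed
qed

lemma descending_genE:
  assumes w: "w \<in> signed_perms n" and "w \<noteq> id"
  obtains s where "s \<in> coxeter_gens n" "s \<circ> s = id" "ninv n (w \<circ> s) < ninv n w"
    "double_length n w = double_length n (w \<circ> s) + 2"
proof -
  obtain p where p: "0 \<le> p" "p < int n" "w (p + 1) < w p"
    using signed_perm_no_descent_eq_id[OF w] \<open>w \<noteq> id\<close> signed_perms_eq_iff[OF w]
    by (metis add_cancel_left_right linorder_neqE_linordered_idom zero_neq_one)
  show ?thesis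
  proof (cases "p = 0")
    case True
    then have n: "1 \<le> n" and "\<not> 0 < w 1" using p signed_perms_zero[OF w] by auto
    then show ?thesis
      using that[OF gen0_coxeter_gens[OF n] gen0_involution] ninv_comp_gen0[OF w n]
        double_length_comp_gen0[OF w n]
      by simp
  next
    case False
    then have i: "1 \<le> p" "p < int n" using p by auto
    then show ?thesis
      using that[OF gen_coxeter_gens[OF i] gen_involution[OF i(1)]] ninv_comp_gen[OF w i]
        double_length_comp_gen[OF w i] p(3)
      by simp
  qed
qed

lemma exists_word_double_length:
  "w \<in> signed_perms n \<Longrightarrow>
     \<exists>ws. set ws \<subseteq> coxeter_gens n \<and> foldr (\<circ>) ws id = w \<and> 2 * int (length ws) = double_length n w"
proof (induction "ninv n w" arbitrary: w rule: less_induct)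
  case less
  note w = less.prems
  show ?case
  proof (cases "w = id")
    case True
    then show ?thesis by (intro exI[of _ "[]"]) (simp add: double_length_id)
  next
    case False
    then obtain s where s: "s \<in> coxeter_gens n" "s \<circ> s = id" "ninv n (w \<circ> s) < ninv n w"
      "double_length n w = double_length n (w \<circ> s) + 2"
      using descending_genE[OF w] by blast
    obtain ws where ws: "set ws \<subseteq> coxeter_gens n" "foldr (\<circ>) ws id = w \<circ> s"
      "2 * int (length ws) = double_length n (w \<circ> s)"
      using less.hyps[OF s(3) signed_perms_comp[OF w coxeter_gens_signed_perms[OF s(1)]]] by blast
    have "foldr (\<circ>) (ws @ [s]) id = w"
      using foldr_comp_eq[of ws s] ws(2) s(2) by (simp add: comp_assoc)
    then show ?thesis using ws(1,3) s(1,4) by (intro exI[of _ "ws @ [s]"]) auto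
  qed
qed

lemma coxeter_length_eq_double_length:
  assumes w: "w \<in> signed_perms n"
  shows "2 * int (coxeter_length n w) = double_length n w"
proof -
  obtain ws where ws: "set ws \<subseteq> coxeter_gens n" "foldr (\<circ>) ws id = w"
    "2 * int (length ws) = double_length n w"
    using exists_word_double_length[OF w] by blast
  have "coxeter_length n w = length ws"
    unfolding coxeter_length_def
  proof (rule Least_equality)
    fix k assume "\<exists>vs. length vs = k \<and> set vs \<subseteq> coxeter_gens n \<and> foldr (\<circ>) vs id = w"
    then show "length ws \<le> k" using double_length_word_le ws(3) by fastforce
  qed (use ws in blast)
  then show ?thesis using ws(3) by simp
qed

section \<open>Descents\<close>

definition descent_set :: "nat \<Rightarrow> (int \<Rightarrow> int) \<Rightarrow> int set" where
  "descent_set n f = {p \<in> {0..<int n}. f (p + 1) < f p}"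

definition simple_refl :: "int \<Rightarrow> int \<Rightarrow> int" where
  "simple_refl p = (if p = 0 then gen0 else gen p)"

lemma inj_on_simple_refl: "inj_on simple_refl {0..}"
proof (rule inj_onI)
  have gen_pos: "gen q p = transpose q (q + 1) p" if "1 \<le> p" "1 \<le> q" for p q
    using that by (simp add: gen_def transpose_def)
  have gen_ne_gen0: "gen r \<noteq> gen0" if "1 \<le> r" for r
  proof
    assume "gen r = gen0"
    then have "transpose r (r + 1) 1 = -1" using gen_pos[of 1 r] that by (simp add: gen0_def)
    then show False using that by (cases "r = 1") (simp_all add: transpose_def)
  qed
  fix p q :: int assume pq: "p \<in> {0..}" "q \<in> {0..}" "simple_refl p = simple_refl q"
  consider "p = 0" "q = 0" | "p = 0" "1 \<le> q" | "1 \<le> p" "q = 0" | "1 \<le> p" "1 \<le> q"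
    using pq(1,2) by force
  then show "p = q"
  proof cases
    case 2 then show ?thesis using pq(3) gen_ne_gen0[of q] by (simp add: simple_refl_def)
  next
    case 3 then show ?thesis using pq(3) gen_ne_gen0[of p] by (simp add: simple_refl_def)
  next
    case 4
    then have "gen q p = gen p p" using pq(3) by (simp add: simple_refl_def)
    also have "\<dots> = p + 1" using 4 by (simp add: gen_def transpose_def)
    finally have "transpose q (q + 1) p = p + 1" using gen_pos[OF 4] by simp
    then show ?thesis by (cases "p = q"; cases "p = q + 1") (simp_all add: transpose_def)
  qed simp
qed

lemma coxeter_length_comp_less_iff:
  assumes w: "w \<in> signed_perms n" and s: "s \<in> coxeter_gens n"
  shows "coxeter_length n (w \<circ> s) < coxeter_length n w \<longleftrightarrow> double_length n (w \<circ> s) < double_length n w"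
  using coxeter_length_eq_double_length[OF w]
    coxeter_length_eq_double_length[OF signed_perms_comp[OF w coxeter_gens_signed_perms[OF s]]]
  by linarith

lemma descending_gens_eq:
  assumes w: "w \<in> signed_perms n"
  shows "{s \<in> coxeter_gens n. coxeter_length n (w \<circ> s) < coxeter_length n w} =
         simple_refl ` descent_set n w"
proof -
  have w0: "w 0 = 0" and w1: "w 1 \<noteq> 0"
    using signed_perms_eq_iff[OF w, of 1 0] signed_perms_zero[OF w] by auto
  have "s \<in> coxeter_gens n \<and> double_length n (w \<circ> s) < double_length n w \<longleftrightarrow>
      (\<exists>p \<in> descent_set n w. s = simple_refl p)" for s
  proof
    assume "s \<in> coxeter_gens n \<and> double_length n (w \<circ> s) < double_length n w"
    then have "s \<in> coxeter_gens n" and less: "double_length n (w \<circ> s) < double_length n w"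
      by auto
    then show "\<exists>p \<in> descent_set n w. s = simple_refl p"
    proof (cases rule: coxeter_gensE)
      case 1
      then show ?thesis using double_length_comp_gen0[OF w] less w0 w1
        by (intro bexI[of _ 0]) (auto simp: simple_refl_def descent_set_def split: if_splits)
    next
      case (2 i)
      then show ?thesis
        using double_length_comp_gen[OF w, of i] less signed_perms_eq_iff[OF w, of i "i + 1"]
        by (intro bexI[of _ i]) (auto simp: simple_refl_def descent_set_def split: if_splits)
    qed
  next
    assume "\<exists>p \<in> descent_set n w. s = simple_refl p"
    then obtain p where p: "0 \<le> p" "p < int n" "w (p + 1) < w p" "s = simple_refl p"
      by (auto simp: descent_set_def)
    show "s \<in> coxeter_gens n \<and> double_length n (w \<circ> s) < double_length n w"
    proof (cases "p = 0")
      case True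
      then show ?thesis using p w0 double_length_comp_gen0[OF w] gen0_coxeter_gens
        by (simp add: simple_refl_def)
    next
      case False
      then show ?thesis using p double_length_comp_gen[OF w, of p] gen_coxeter_gens[of p n]
        by (simp add: simple_refl_def)
    qed
  qed
  then show ?thesis using coxeter_length_comp_less_iff[OF w] by blast
qed

lemma des_eq_card_descent_set: "w \<in> signed_perms n \<Longrightarrow> des n w = card (descent_set n w)"
  unfolding des_def descending_gens_eq
  by (rule card_image, rule inj_on_subset[OF inj_on_simple_refl]) (auto simp: descent_set_def)

lemma descent_set_subset: "descent_set n f \<subseteq> {0..<int n}"
  by (auto simp: descent_set_def)

lemma des_le: "w \<in> signed_perms n \<Longrightarrow> des n w \<le> n"
  using card_mono[OF finite_atLeastLessThan_int descent_set_subset[of n w]] des_eq_card_descent_set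
  by simp

section \<open>Counting compatible sequences\<close>

text \<open>Sequences 0 = f 0 \<le> f 1 \<le> ... \<le> f n \<le> k, strict at the positions in D
  (the D-compatible sequences of P-partition theory), extended by zero outside {1..n}.\<close>

definition compatible :: "nat \<Rightarrow> int \<Rightarrow> int set \<Rightarrow> (int \<Rightarrow> int) set" where
  "compatible n k D = {f. (\<forall>x. x \<notin> {1..int n} \<longrightarrow> f x = 0) \<and>
      (\<forall>p \<in> {0..<int n}. f p \<le> f (p + 1) \<and> (p \<in> D \<longrightarrow> f p < f (p + 1))) \<and> f (int n) \<le> k}"

definition chain_count :: "nat \<Rightarrow> int \<Rightarrow> int" where
  "chain_count n t = (if t < 0 then 0 else int ((nat t + n) choose n))"

lemma int_mono_by_steps:
  fixes f :: "int \<Rightarrow> 'a::order"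
  assumes steps: "\<And>p. a \<le> p \<Longrightarrow> p < b \<Longrightarrow> f p \<le> f (p + 1)"
    and "a \<le> p" "p \<le> q" "q \<le> b"
  shows "f p \<le> f q"
  using \<open>p \<le> q\<close> \<open>q \<le> b\<close>
proof (induction q rule: int_ge_induct)
  case (step q)
  then show ?case using assms(2) steps[of q] by simp
qed simp

lemma compatible_zero: "f \<in> compatible n k D \<Longrightarrow> x \<notin> {1..int n} \<Longrightarrow> f x = 0"
  unfolding compatible_def by auto

lemma compatible_le:
  "f \<in> compatible n k D \<Longrightarrow> 0 \<le> p \<Longrightarrow> p \<le> q \<Longrightarrow> q \<le> int n \<Longrightarrow> f p \<le> f q"
  by (rule int_mono_by_steps[of 0 "int n"]) (auto simp: compatible_def)

lemma compatible_bounds: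
  assumes f: "f \<in> compatible n k D"
  shows "0 \<le> f p" "f p \<le> k"
proof -
  have "f (int n) \<le> k" using f by (simp add: compatible_def)
  then show "0 \<le> f p" "f p \<le> k"
    using compatible_le[OF f, of 0 p] compatible_le[OF f, of p "int n"]
      compatible_le[OF f, of 0 "int n"]
      compatible_zero[OF f, of 0] compatible_zero[OF f, of p]
    by (cases "p \<in> {1..int n}"; force)+
qed

lemma finite_compatible: "finite (compatible n k D)"
proof -
  have "compatible n k D \<subseteq> (\<lambda>h x. if x \<in> {1..int n} then h x else 0) ` ({1..int n} \<rightarrow>\<^sub>E {0..k})"
  proof
    fix f assume f: "f \<in> compatible n k D"
    then show "f \<in> (\<lambda>h x. if x \<in> {1..int n} then h x else 0) ` ({1..int n} \<rightarrow>\<^sub>E {0..k})"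
      using compatible_bounds[OF f] compatible_zero[OF f]
      by (intro image_eqI[of _ _ "restrict f {1..int n}"]) (auto simp: fun_eq_iff)
  qed
  then show ?thesis by (rule finite_subset) (intro finite_imageI finite_PiE; simp)
qed

lemma compatible_Suc_bij:
  "bij_betw (\<lambda>f. (f (int n + 1), f(int n + 1 := 0))) (compatible (Suc n) m {})
     (SIGMA t:{0..m}. compatible n t {})"
proof (rule bij_betw_byWitness[where f' = "\<lambda>(t, g). g(int n + 1 := t)"])
  show "(\<lambda>f. (f (int n + 1), f(int n + 1 := 0))) ` compatible (Suc n) m {}
      \<subseteq> (SIGMA t:{0..m}. compatible n t {})"
  proof clarify
    fix f assume f: "f \<in> compatible (Suc n) m {}"
    then have "f(int n + 1 := 0) \<in> compatible n (f (int n + 1)) {}"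
      unfolding compatible_def by auto
    then show "f (int n + 1) \<in> {0..m} \<and> f(int n + 1 := 0) \<in> compatible n (f (int n + 1)) {}"
      using compatible_bounds[OF f] by auto
  qed
qed (auto simp: compatible_def fun_eq_iff)

lemma card_compatible_empty: "int (card (compatible n t {})) = chain_count n t"
proof (induction n arbitrary: t)
  case 0
  have "compatible 0 t {} = (if 0 \<le> t then {\<lambda>_. 0} else {})"
    unfolding compatible_def by (auto simp: fun_eq_iff)
  then show ?case by (simp add: chain_count_def)
next
  case (Suc n)
  show ?case
  proof (cases "t < 0")
    case True
    then have "compatible (Suc n) t {} = {}"
      by (meson compatible_bounds equals0I order.trans not_le)
    then show ?thesis using True by (simp add: chain_count_def)
  next
    case False
    have "int (card (compatible (Suc n) t {})) = int (card (SIGMA t':{0..t}. compatible n t' {}))"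
      using bij_betw_same_card[OF compatible_Suc_bij] by simp
    also have "\<dots> = (\<Sum>t'\<in>{0..t}. int (card (compatible n t' {})))"
      by (simp add: card_SigmaI finite_compatible)
    also have "\<dots> = (\<Sum>t'\<in>int ` {0..nat t}. int ((nat t' + n) choose n))"
      using False by (simp add: Suc chain_count_def image_int_atLeastAtMost)
    also have "\<dots> = int (\<Sum>k\<le>nat t. (n + k) choose k)"
      using binomial_symmetric[OF le_add2, of _ n]
      by (simp add: sum.reindex atLeast0AtMost add.commute)
    also have "\<dots> = int (Suc (n + nat t) choose nat t)"
      by (simp only: sum_choose_lower)
    also have "\<dots> = chain_count (Suc n) t"
      using False binomial_symmetric[of "Suc n" "nat t + Suc n"]
      by (simp add: chain_count_def add.commute del: binomial_Suc_Suc)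
    finally show ?thesis .
  qed
qed

definition below_count :: "int set \<Rightarrow> int \<Rightarrow> int" where
  "below_count D p = int (card {d \<in> D. d < p})"

lemma below_count_step:
  assumes "finite D"
  shows "below_count D (p + 1) = below_count D p + (if p \<in> D then 1 else 0)"
proof -
  have "{d \<in> D. d < p + 1} = (if p \<in> D then insert p {d \<in> D. d < p} else {d \<in> D. d < p})"
    by (auto dest: order_le_imp_less_or_eq)
  then show ?thesis using assms by (simp add: below_count_def)
qed

lemma below_count_eq_0: "D \<subseteq> {0..<int n} \<Longrightarrow> below_count D 0 = 0"
proof -
  assume "D \<subseteq> {0..<int n}"
  then have "{d \<in> D. d < 0} = {}" by auto
  then show ?thesis by (simp only: below_count_def card.empty of_nat_0)
qed

lemma below_count_top: "D \<subseteq> {0..<int n} \<Longrightarrow> below_count D (int n) = int (card D)"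
proof -
  assume "D \<subseteq> {0..<int n}"
  then have "{d \<in> D. d < int n} = D" by auto
  then show ?thesis by (simp add: below_count_def)
qed

definition add_on :: "nat \<Rightarrow> (int \<Rightarrow> int) \<Rightarrow> (int \<Rightarrow> int) \<Rightarrow> int \<Rightarrow> int" where
  "add_on n g f p = (if p \<in> {1..int n} then f p + g p else 0)"

text \<open>Subtracting the number of descents below each position turns the strict steps into weak ones.\<close>

lemma add_on_below_count_compatible:
  assumes D: "D \<subseteq> {0..<int n}" and f: "f \<in> compatible n k D"
  shows "add_on n (\<lambda>p. - below_count D p) f \<in> compatible n (k - int (card D)) {}"
proof -
  let ?g = "add_on n (\<lambda>p. - below_count D p) f"
  have fin: "finite D" using D finite_subset by blast
  have g: "?g p = f p - below_count D p" if "0 \<le> p" "p \<le> int n" for p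
    using that compatible_zero[OF f, of 0] below_count_eq_0[OF D]
    by (cases "p = 0") (auto simp: add_on_def)
  have "?g p \<le> ?g (p + 1)" if "p \<in> {0..<int n}" for p
    using that f g[of p] g[of "p + 1"] below_count_step[OF fin, of p]
    by (auto simp: compatible_def split: if_splits)
  moreover have "?g (int n) \<le> k - int (card D)"
    using f g[of "int n"] below_count_top[OF D] by (simp add: compatible_def)
  ultimately show ?thesis unfolding compatible_def by (simp add: add_on_def)
qed

lemma add_on_below_count_compatible_rev:
  assumes D: "D \<subseteq> {0..<int n}" and h: "h \<in> compatible n (k - int (card D)) {}"
  shows "add_on n (below_count D) h \<in> compatible n k D"
proof -
  let ?g = "add_on n (below_count D) h"
  have fin: "finite D" using D finite_subset by blast
  have g: "?g p = h p + below_count D p" if "0 \<le> p" "p \<le> int n" for p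
    using that compatible_zero[OF h, of 0] below_count_eq_0[OF D]
    by (cases "p = 0") (auto simp: add_on_def)
  have "?g p \<le> ?g (p + 1) \<and> (p \<in> D \<longrightarrow> ?g p < ?g (p + 1))" if p: "p \<in> {0..<int n}" for p
  proof -
    have "h p \<le> h (p + 1)" using h p by (simp add: compatible_def)
    then show ?thesis using p g[of p] g[of "p + 1"] below_count_step[OF fin, of p] by auto
  qed
  moreover have "?g (int n) \<le> k"
    using h g[of "int n"] below_count_top[OF D] by (simp add: compatible_def)
  ultimately show ?thesis unfolding compatible_def by (simp add: add_on_def)
qed

lemma card_compatible:
  assumes D: "D \<subseteq> {0..<int n}"
  shows "int (card (compatible n k D)) = chain_count n (k - int (card D))"
proof -
  have "bij_betw (add_on n (\<lambda>p. - below_count D p))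
      (compatible n k D) (compatible n (k - int (card D)) {})"
    by (rule bij_betw_byWitness[where f' = "add_on n (below_count D)"])
      (use add_on_below_count_compatible[OF D] add_on_below_count_compatible_rev[OF D] in
        \<open>auto simp: add_on_def fun_eq_iff dest: compatible_zero\<close>)
  then show ?thesis using card_compatible_empty bij_betw_same_card by metis
qed

section \<open>Ranking by value\<close>

definition sort_less :: "(int \<Rightarrow> int) \<Rightarrow> int \<Rightarrow> int \<Rightarrow> bool" where
  "sort_less F a b \<longleftrightarrow> F a < F b \<or> (F a = F b \<and> a < b)"

lemma sort_less_irrefl: "\<not> sort_less F a a"
  by (simp add: sort_less_def)

lemma sort_less_trans: "sort_less F a b \<Longrightarrow> sort_less F b c \<Longrightarrow> sort_less F a c"
  by (auto simp: sort_less_def)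

lemma sort_less_asym: "sort_less F a b \<Longrightarrow> \<not> sort_less F b a"
  by (auto simp: sort_less_def)

lemma sort_less_total: "a \<noteq> b \<Longrightarrow> sort_less F a b \<or> sort_less F b a"
  by (auto simp: sort_less_def)

lemma sort_less_uminus: "(\<And>v. F (- v) = - F v) \<Longrightarrow> sort_less F (- a) (- b) \<longleftrightarrow> sort_less F b a"
  by (auto simp: sort_less_def)

text \<open>The position of v in the stable sorting of the values of F on -n, ..., n,
  counted from -n.\<close>

definition sort_rank :: "nat \<Rightarrow> (int \<Rightarrow> int) \<Rightarrow> int \<Rightarrow> int" where
  "sort_rank n F v = (if v \<in> signed_interval n
     then int (card {u \<in> signed_interval n. sort_less F u v}) - int n else v)"

lemma finite_signed_interval_filter: "finite {v \<in> signed_interval n. P v}"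
  by (rule finite_subset[of _ "signed_interval n"]) auto

lemma sort_rank_mono:
  assumes a: "a \<in> signed_interval n" and b: "b \<in> signed_interval n" and lt: "sort_less F a b"
  shows "sort_rank n F a < sort_rank n F b"
proof -
  have "{u \<in> signed_interval n. sort_less F u a} \<subset> {u \<in> signed_interval n. sort_less F u b}"
    using a lt sort_less_trans sort_less_irrefl by blast
  then have "card {u \<in> signed_interval n. sort_less F u a}
      < card {u \<in> signed_interval n. sort_less F u b}"
    by (rule psubset_card_mono[OF finite_signed_interval_filter])
  then show ?thesis using a b by (simp add: sort_rank_def)
qed

lemma card_sort_less_below_above:
  assumes v: "v \<in> signed_interval n"
  shows "card {u \<in> signed_interval n. sort_less F u v} +
         card {u \<in> signed_interval n. sort_less F v u} = 2 * n"
proof -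
  let ?A = "{u \<in> signed_interval n. sort_less F u v}"
  let ?B = "{u \<in> signed_interval n. sort_less F v u}"
  have "signed_interval n = insert v (?A \<union> ?B)" "v \<notin> ?A \<union> ?B" "?A \<inter> ?B = {}"
    using v sort_less_total sort_less_irrefl sort_less_asym by blast+
  then have "card (signed_interval n) = Suc (card (?A \<union> ?B))"
    using finite_signed_interval_filter by (metis card_insert_disjoint finite_Un)
  also have "card (?A \<union> ?B) = card ?A + card ?B"
    using \<open>?A \<inter> ?B = {}\<close> by (rule card_Un_disjoint[OF finite_signed_interval_filter
        finite_signed_interval_filter])
  finally show ?thesis by simp
qed

lemma sort_rank_in: "v \<in> signed_interval n \<Longrightarrow> sort_rank n F v \<in> signed_interval n"
  using card_sort_less_below_above[of v n F] by (simp add: sort_rank_def)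

lemma sort_rank_uminus:
  assumes odd: "\<And>v. F (- v) = - F v"
  shows "sort_rank n F (- v) = - sort_rank n F v"
proof (cases "v \<in> signed_interval n")
  case True
  have "{u \<in> signed_interval n. sort_less F u (- v)} =
      uminus ` {u \<in> signed_interval n. sort_less F v u}"
  proof (intro equalityI subsetI)
    fix y assume "y \<in> {u \<in> signed_interval n. sort_less F u (- v)}"
    then have "- y \<in> {u \<in> signed_interval n. sort_less F v u}"
      using sort_less_uminus[of F "- y" v, OF odd] by auto
    then show "y \<in> uminus ` {u \<in> signed_interval n. sort_less F v u}"
      by (rule rev_image_eqI) simp
  qed (use sort_less_uminus[of F _ v, OF odd] in auto)
  then have "card {u \<in> signed_interval n. sort_less F u (- v)} =
      card {u \<in> signed_interval n. sort_less F v u}"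
    by (simp add: card_image)
  then show ?thesis
    using card_sort_less_below_above[OF True, of F] True by (simp add: sort_rank_def)
qed (auto simp: sort_rank_def)

lemma signed_perms_sort_rank:
  assumes odd: "\<And>v. F (- v) = - F v"
  shows "sort_rank n F \<in> signed_perms n"
proof -
  have "inj_on (sort_rank n F) (signed_interval n)"
    by (rule inj_onI) (metis sort_less_total sort_rank_mono order_less_irrefl)
  then have "sort_rank n F permutes signed_interval n"
  proof (rule inj_imp_permutes)
    show "sort_rank n F i = i" if "i \<notin> signed_interval n" for i
      unfolding sort_rank_def by (simp only: if_not_P[OF that])
    show "sort_rank n F x \<in> signed_interval n" if "x \<in> signed_interval n" for x
      using sort_rank_in[OF that] .
  qed simp
  then show ?thesis unfolding signed_perms_def using sort_rank_uminus[where F = F, OF odd] by auto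
qed

lemma sort_rank_less_iff:
  assumes a: "a \<in> signed_interval n" and b: "b \<in> signed_interval n"
  shows "sort_rank n F a < sort_rank n F b \<longleftrightarrow> sort_less F a b"
proof
  assume lt: "sort_rank n F a < sort_rank n F b"
  then have "a \<noteq> b" by auto
  then show "sort_less F a b" using sort_less_total sort_rank_mono[OF b a] lt by force
qed (rule sort_rank_mono[OF a b])

lemma sort_rank_eq_signed_perm:
  assumes u: "u \<in> signed_perms n"
    and ord: "\<And>a b. a \<in> signed_interval n \<Longrightarrow> b \<in> signed_interval n \<Longrightarrow> sort_less F a b \<longleftrightarrow> u a < u b"
  shows "sort_rank n F = u"
proof
  fix v
  show "sort_rank n F v = u v"
  proof (cases "v \<in> signed_interval n")
    case True
    have "u ` {v' \<in> signed_interval n. u v' < u v} = {- int n..<u v}"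
    proof (intro equalityI subsetI)
      fix x assume "x \<in> {- int n..<u v}"
      then have "inv u x \<in> signed_interval n" "x = u (inv u x)"
        using signed_perms_in[OF u True] signed_perms_in[OF signed_perms_inv[OF u], of x]
          signed_perms_apply_inv[OF u] by auto
      then show "x \<in> u ` {v' \<in> signed_interval n. u v' < u v}"
        using \<open>x \<in> {- int n..<u v}\<close>
        by (metis (mono_tags, lifting) atLeastLessThan_iff image_eqI mem_Collect_eq)
    qed (use signed_perms_in[OF u] in auto)
    then have "card {v' \<in> signed_interval n. u v' < u v} = card {- int n..<u v}"
      using card_image[OF inj_on_subset[OF signed_perms_inj[OF u] subset_UNIV]] by metis
    then have "card {v' \<in> signed_interval n. u v' < u v} = nat (u v + int n)" by simp
    moreover have "{v' \<in> signed_interval n. sort_less F v' v} =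
        {v' \<in> signed_interval n. u v' < u v}"
      using ord True by auto
    ultimately show ?thesis using True signed_perms_in[OF u True] by (simp add: sort_rank_def)
  qed (auto simp: sort_rank_def signed_perms_fixpoint[OF u])
qed

section \<open>Signed permutations and compatible sequences\<close>

definition odd_ext :: "(int \<Rightarrow> int) \<Rightarrow> int \<Rightarrow> int" where
  "odd_ext f p = (if 0 \<le> p then f p else - f (- p))"

lemma odd_ext_uminus: "f 0 = 0 \<Longrightarrow> odd_ext f (- p) = - odd_ext f p"
  by (auto simp: odd_ext_def)

definition bounded_fns :: "nat \<Rightarrow> int \<Rightarrow> (int \<Rightarrow> int) set" where
  "bounded_fns n k = {x. (\<forall>q. q \<notin> {1..int n} \<longrightarrow> x q = 0) \<and> (\<forall>q. \<bar>x q\<bar> \<le> k)}"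

definition perm_compat :: "nat \<Rightarrow> int \<Rightarrow> ((int \<Rightarrow> int) \<times> (int \<Rightarrow> int)) set" where
  "perm_compat n k = (SIGMA w:signed_perms n. compatible n k (descent_set n w))"

text \<open>The signed analogue of splitting a word into a permutation and a compatible sequence:
  a function x on 1, ..., n with values in [-k, k] is extended oddly and stably sorted on
  -n, ..., n; the sorting permutation w and the sorted values f, read on 0, ..., n, form a pair in
  perm_compat n k, and x is recovered by scattering f back along w.\<close>

definition scatter :: "nat \<Rightarrow> (int \<Rightarrow> int) \<times> (int \<Rightarrow> int) \<Rightarrow> int \<Rightarrow> int" where
  "scatter n = (\<lambda>(w, f) q. if q \<in> {1..int n} then odd_ext f (inv w q) else 0)"

definition sorting_perm :: "nat \<Rightarrow> (int \<Rightarrow> int) \<Rightarrow> int \<Rightarrow> int" where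
  "sorting_perm n x = inv (sort_rank n (odd_ext x))"

definition sorted_values :: "nat \<Rightarrow> (int \<Rightarrow> int) \<Rightarrow> int \<Rightarrow> int" where
  "sorted_values n x p = (if p \<in> {1..int n} then odd_ext x (sorting_perm n x p) else 0)"

lemma bounded_fns_zero: "x \<in> bounded_fns n k \<Longrightarrow> x 0 = 0"
  by (simp add: bounded_fns_def)

lemma bounded_fns_bound: "x \<in> bounded_fns n k \<Longrightarrow> \<bar>odd_ext x p\<bar> \<le> k"
  by (auto simp: bounded_fns_def odd_ext_def)

lemma sorting_perm_props:
  assumes x: "x \<in> bounded_fns n k"
  defines "F \<equiv> odd_ext x"
  shows "sort_rank n F \<in> signed_perms n" "sorting_perm n x \<in> signed_perms n"
    "\<And>v. sort_rank n F (sorting_perm n x v) = v" "\<And>v. sorting_perm n x (sort_rank n F v) = v"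
    "\<And>p. 0 \<le> p \<Longrightarrow> p \<le> int n \<Longrightarrow> sorted_values n x p = F (sorting_perm n x p)"
proof -
  have odd: "\<And>v. F (- v) = - F v" unfolding F_def
    using odd_ext_uminus bounded_fns_zero[OF x] by blast
  show u: "sort_rank n F \<in> signed_perms n" by (rule signed_perms_sort_rank[where F = F, OF odd])
  then show w: "sorting_perm n x \<in> signed_perms n"
    and "sort_rank n F (sorting_perm n x v) = v" "sorting_perm n x (sort_rank n F v) = v" for v
    unfolding sorting_perm_def F_def[symmetric]
    by (simp_all add: signed_perms_inv signed_perms_apply_inv signed_perms_inv_apply)
  show "sorted_values n x p = F (sorting_perm n x p)" if "0 \<le> p" "p \<le> int n" for p
    using that signed_perms_zero[OF w] odd[of 0]
    by (cases "p = 0") (auto simp: sorted_values_def F_def)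
qed

lemma sort_decomp_in:
  assumes x: "x \<in> bounded_fns n k"
  shows "(sorting_perm n x, sorted_values n x) \<in> perm_compat n k"
proof -
  let ?F = "odd_ext x" and ?w = "sorting_perm n x" and ?f = "sorted_values n x"
  note props = sorting_perm_props[OF x]
  have "?f p \<le> ?f (p + 1) \<and> (p \<in> descent_set n ?w \<longrightarrow> ?f p < ?f (p + 1))"
    if p: "p \<in> {0..<int n}" for p
  proof -
    have "?w p \<in> signed_interval n" "?w (p + 1) \<in> signed_interval n"
      using p signed_perms_in[OF props(2)] by auto
    then have "sort_less ?F (?w p) (?w (p + 1))"
      using sort_rank_less_iff[of "?w p" n "?w (p + 1)" ?F] props(3) by simp
    then show ?thesis using props(5)[of p] props(5)[of "p + 1"] p
      by (auto simp: sort_less_def descent_set_def)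
  qed
  moreover have "?f (int n) \<le> k"
    using props(5)[of "int n"] bounded_fns_bound[OF x] by (simp add: abs_le_iff)
  ultimately show ?thesis
    using props(2) by (simp add: perm_compat_def compatible_def sorted_values_def)
qed

lemma scatter_sort_decomp:
  assumes x: "x \<in> bounded_fns n k"
  shows "scatter n (sorting_perm n x, sorted_values n x) = x"
proof
  fix q
  note props = sorting_perm_props[OF x]
  have "inv (sorting_perm n x) = sort_rank n (odd_ext x)"
    unfolding sorting_perm_def using permutes_inv_inv[OF signed_perms_permutes[OF props(1)]] .
  moreover have "sort_rank n (odd_ext x) q \<in> signed_interval n" if "q \<in> {1..int n}"
    using that signed_perms_in[OF props(1)] by auto
  \<comment> \<open>the sorted values are odd, so their odd extension agrees with them on the whole interval\<close>
  moreover have "odd_ext (sorted_values n x) p = odd_ext x (sorting_perm n x p)"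
    if "p \<in> signed_interval n" for p
    using that props(5)[of p] props(5)[of "- p"] signed_perms_odd[OF props(2), of p]
      bounded_fns_zero[OF x]
    by (cases "0 \<le> p") (auto simp: odd_ext_def)
  ultimately show "scatter n (sorting_perm n x, sorted_values n x) q = x q"
    using x props(4) by (auto simp: scatter_def bounded_fns_def odd_ext_def)
qed

lemma perm_compatD:
  assumes "(w, f) \<in> perm_compat n k"
  shows "w \<in> signed_perms n" "f \<in> compatible n k (descent_set n w)"
  using assms by (auto simp: perm_compat_def)

lemma scatter_in:
  assumes wf: "(w, f) \<in> perm_compat n k"
  shows "scatter n (w, f) \<in> bounded_fns n k"
proof -
  have "\<bar>f p\<bar> \<le> k" "0 \<le> k" for p
    using compatible_bounds[OF perm_compatD(2)[OF wf]] by (metis abs_of_nonneg order.trans)+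
  then show ?thesis unfolding bounded_fns_def scatter_def by (auto simp: odd_ext_def)
qed

lemma odd_ext_compatible_step:
  assumes wf: "(w, f) \<in> perm_compat n k" and p: "- int n \<le> p" "p < int n"
  shows "odd_ext f p \<le> odd_ext f (p + 1) \<and> (w (p + 1) < w p \<longrightarrow> odd_ext f p < odd_ext f (p + 1))"
proof -
  note w = perm_compatD(1)[OF wf] and f = perm_compatD(2)[OF wf]
  have step: "f q \<le> f (q + 1) \<and> (w (q + 1) < w q \<longrightarrow> f q < f (q + 1))" if "0 \<le> q" "q < int n" for q
    using f that by (simp add: compatible_def descent_set_def)
  show ?thesis
  proof (cases "0 \<le> p")
    case False
    \<comment> \<open>below 0 the step from p to p + 1 mirrors the step from -p-1 to -p\<close>
    define q where "q = - p - 1"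
    have q: "0 \<le> q" "q < int n" "p = - (q + 1)" "p + 1 = - q"
      using False p by (auto simp: q_def)
    have "odd_ext f p = - f (q + 1)" "odd_ext f (p + 1) = - f q"
      using q(1,3) compatible_zero[OF f, of 0] by (auto simp: odd_ext_def add.commute)
    moreover have "w p = - w (q + 1)" unfolding q(3) by (rule signed_perms_odd[OF w])
    moreover have "w (p + 1) = - w q" using q(4) signed_perms_odd[OF w] by simp
    ultimately show ?thesis using step[OF q(1,2)] by auto
  qed (use step p in \<open>simp add: odd_ext_def\<close>)
qed

lemma odd_ext_scatter:
  assumes wf: "(w, f) \<in> perm_compat n k"
  shows "odd_ext (scatter n (w, f)) v = odd_ext f (inv w v)"
proof -
  note f = perm_compatD(2)[OF wf]
  have u: "inv w \<in> signed_perms n" by (rule signed_perms_inv[OF perm_compatD(1)[OF wf]])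
  consider "v \<in> {1..int n}" | "v = 0" | "- v \<in> {1..int n}" | "v \<notin> signed_interval n"
    by force
  then show ?thesis
  proof cases
    case 2 then show ?thesis using signed_perms_zero[OF u] compatible_zero[OF f, of 0]
      by (simp add: scatter_def odd_ext_def)
  next
    case 3 then show ?thesis
      using signed_perms_odd[OF u, of v] odd_ext_uminus[of f "inv w v"] compatible_zero[OF f, of 0]
      by (simp add: scatter_def odd_ext_def)
  next
    case 4 then show ?thesis using signed_perms_fixpoint[OF u 4] compatible_zero[OF f]
      by (auto simp: scatter_def odd_ext_def)
  qed (simp add: scatter_def odd_ext_def)
qed

text \<open>Along w, the values of the scattered function increase weakly, and strictly at the
  descents of w; this is exactly what makes w the stable sorting permutation.\<close>

lemma sort_less_scatter_of_less:
  assumes wf: "(w, f) \<in> perm_compat n k" and cd: "- int n \<le> c" "c < d" "d \<le> int n"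
  shows "sort_less (odd_ext (scatter n (w, f))) (w c) (w d)"
proof -
  note w = perm_compatD(1)[OF wf]
  let ?F = "odd_ext (scatter n (w, f))"
  have F: "?F (w p) = odd_ext f p" for p
    using odd_ext_scatter[OF wf] signed_perms_inv_apply[OF w] by simp
  have adjacent: "sort_less ?F (w p) (w (p + 1))" if "- int n \<le> p" "p < int n" for p
    using odd_ext_compatible_step[OF wf that] signed_perms_eq_iff[OF w, of p "p + 1"]
    by (auto simp: sort_less_def F)
  show ?thesis using cd(2,3)
  proof (induction d rule: int_gr_induct)
    case base then show ?case using adjacent cd(1) by simp
  next
    case (step d) then show ?case using adjacent[of d] sort_less_trans cd(1) by auto
  qed
qed

lemma sort_less_scatter_iff:
  assumes wf: "(w, f) \<in> perm_compat n k" and ab: "a \<in> signed_interval n" "b \<in> signed_interval n"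
  shows "sort_less (odd_ext (scatter n (w, f))) a b \<longleftrightarrow> inv w a < inv w b"
proof -
  note w = perm_compatD(1)[OF wf]
  have u: "inv w \<in> signed_perms n" by (rule signed_perms_inv[OF w])
  have "sort_less (odd_ext (scatter n (w, f))) a b"
    if "a \<in> signed_interval n" "b \<in> signed_interval n" "inv w a < inv w b" for a b
    using sort_less_scatter_of_less[OF wf, of "inv w a" "inv w b"] that signed_perms_in[OF u]
      signed_perms_apply_inv[OF w]
    by force
  then show ?thesis
    using ab sort_less_asym sort_less_irrefl signed_perms_eq_iff[OF u, of a b]
    by (metis linorder_neqE)
qed

lemma sort_decomp_scatter:
  assumes wf: "(w, f) \<in> perm_compat n k"
  shows "(sorting_perm n (scatter n (w, f)), sorted_values n (scatter n (w, f))) = (w, f)"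
proof -
  note w = perm_compatD(1)[OF wf] and f = perm_compatD(2)[OF wf]
  have "sort_rank n (odd_ext (scatter n (w, f))) = inv w"
    by (rule sort_rank_eq_signed_perm[OF signed_perms_inv[OF w] sort_less_scatter_iff[OF wf]])
  then have W: "sorting_perm n (scatter n (w, f)) = w"
    unfolding sorting_perm_def using permutes_inv_inv[OF signed_perms_permutes[OF w]] by simp
  have "sorted_values n (scatter n (w, f)) p = f p" for p
  proof (cases "p \<in> {1..int n}")
    case True
    then show ?thesis using signed_perms_inv_apply[OF w]
      by (simp add: sorted_values_def W odd_ext_scatter[OF wf]) (simp add: odd_ext_def)
  qed (use compatible_zero[OF f, of p] in \<open>auto simp: sorted_values_def\<close>)
  then show ?thesis using W by auto
qed

lemma scatter_bij: "bij_betw (scatter n) (perm_compat n k) (bounded_fns n k)"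
  by (rule bij_betw_byWitness[where f' = "\<lambda>x. (sorting_perm n x, sorted_values n x)"])
    (use sort_decomp_scatter scatter_sort_decomp scatter_in sort_decomp_in in auto)

lemma descent_set_inv_eq:
  assumes wf: "(w, f) \<in> perm_compat n k"
  shows "descent_set n (inv w) = descent_set n (scatter n (w, f))"
proof -
  have "inv w (q + 1) < inv w q \<longleftrightarrow> scatter n (w, f) (q + 1) < scatter n (w, f) q"
    if q: "q \<in> {0..<int n}" for q
    using sort_less_scatter_iff[OF wf, of "q + 1" q] q by (auto simp: sort_less_def odd_ext_def)
  then show ?thesis unfolding descent_set_def by auto
qed

section \<open>Combining two compatible sequences\<close>

definition combine :: "int \<Rightarrow> (int \<Rightarrow> int) \<times> (int \<Rightarrow> int) \<Rightarrow> int \<Rightarrow> int" where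
  "combine k = (\<lambda>(x, g) q. (2 * k + 1) * g q + x q)"

definition uncombine :: "nat \<Rightarrow> int \<Rightarrow> (int \<Rightarrow> int) \<Rightarrow> (int \<Rightarrow> int) \<times> (int \<Rightarrow> int)" where
  "uncombine n k N = ((\<lambda>q. if q \<in> {1..int n} then (N q + k) mod (2 * k + 1) - k else 0),
                      (\<lambda>q. if q \<in> {1..int n} then (N q + k) div (2 * k + 1) else 0))"

lemma balanced_digit_div_mod:
  fixes k x :: int
  assumes "\<bar>x\<bar> \<le> k"
  shows "((2 * k + 1) * g + x + k) div (2 * k + 1) = g"
    and "((2 * k + 1) * g + x + k) mod (2 * k + 1) = x + k"
proof -
  have e: "(2 * k + 1) * g + x + k = (x + k) + g * (2 * k + 1)" by (simp add: algebra_simps)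
  have "0 \<le> x + k" "x + k < 2 * k + 1" using assms by auto
  then show "((2 * k + 1) * g + x + k) div (2 * k + 1) = g"
    "((2 * k + 1) * g + x + k) mod (2 * k + 1) = x + k"
    unfolding e by (simp_all add: div_pos_pos_trivial mod_pos_pos_trivial)
qed

text \<open>N = (2k+1) g + x with balanced digits x in [-k, k]: N is weakly increasing exactly when g is,
  and x may only descend where g jumps.\<close>

lemma combine_compatible:
  assumes k: "0 \<le> k" and x: "x \<in> bounded_fns n k" and g: "g \<in> compatible n l (descent_set n x)"
  shows "combine k (x, g) \<in> compatible n (2 * k * l + k + l) {}"
proof -
  let ?K = "2 * k + 1" and ?N = "combine k (x, g)"
  have xb: "\<bar>x q\<bar> \<le> k" for q using x by (simp add: bounded_fns_def)
  have N: "?N q = ?K * g q + x q" for q by (simp add: combine_def)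
  have "?N p \<le> ?N (p + 1)" if p: "p \<in> {0..<int n}" for p
  proof (cases "g p < g (p + 1)")
    case True
    then have "?K * (g p + 1) \<le> ?K * g (p + 1)" using k by (intro mult_left_mono) auto
    moreover have "x p - x (p + 1) \<le> 2 * k"
      using xb[of p] xb[of "p + 1"] by (simp add: abs_le_iff)
    ultimately show ?thesis unfolding N by (simp add: algebra_simps)
  next
    case False
    have "g p \<le> g (p + 1)" "x (p + 1) < x p \<longrightarrow> g p < g (p + 1)"
      using g p by (auto simp: compatible_def descent_set_def)
    then show ?thesis unfolding N using False by simp
  qed
  moreover have "?N (int n) \<le> 2 * k * l + k + l"
  proof -
    have "?K * g (int n) \<le> ?K * l"
      using k g by (intro mult_left_mono) (auto simp: compatible_def)
    then show ?thesis using xb[of "int n"] unfolding N by (simp add: algebra_simps abs_le_iff)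
  qed
  ultimately show ?thesis
    using compatible_zero[OF g] x by (auto simp: compatible_def N bounded_fns_def)
qed

lemma uncombine_in:
  assumes k: "0 \<le> k" and N: "N \<in> compatible n (2 * k * l + k + l) {}"
  shows "uncombine n k N \<in> (SIGMA x:bounded_fns n k. compatible n l (descent_set n x))"
proof -
  let ?K = "2 * k + 1"
  obtain X G where XG: "uncombine n k N = (X, G)" by force
  have K: "0 < ?K" using k by simp
  have X: "X q = (N q + k) mod ?K - k" and G: "G q = (N q + k) div ?K" if "0 \<le> q" "q \<le> int n" for q
    using XG that compatible_zero[OF N, of 0] k
    by (cases "q = 0"; auto simp: uncombine_def div_pos_pos_trivial mod_pos_pos_trivial)+
  have NXG: "N q = ?K * G q + X q" if "0 \<le> q" "q \<le> int n" for q
    using X[OF that] G[OF that] div_mult_mod_eq[of "N q + k" ?K] by (simp add: algebra_simps)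
  have "X \<in> bounded_fns n k"
    using XG pos_mod_sign[OF K] pos_mod_bound[OF K] k
    by (auto simp: uncombine_def bounded_fns_def abs_le_iff)
  moreover have "G p \<le> G (p + 1) \<and> (p \<in> descent_set n X \<longrightarrow> G p < G (p + 1))"
    if p: "p \<in> {0..<int n}" for p
  proof -
    have Nm: "N p \<le> N (p + 1)" using N p by (simp add: compatible_def)
    then have "G p \<le> G (p + 1)" using G[of p] G[of "p + 1"] p K by (simp add: zdiv_mono1)
    moreover have "G p < G (p + 1)" if "X (p + 1) < X p"
    proof (rule ccontr)
      assume "\<not> G p < G (p + 1)"
      then have "G p = G (p + 1)" using \<open>G p \<le> G (p + 1)\<close> by simp
      then show False using NXG[of p] NXG[of "p + 1"] p that Nm by simp
    qed
    ultimately show ?thesis by (simp add: descent_set_def)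
  qed
  moreover have "G (int n) \<le> l"
  proof -
    have "N (int n) \<le> 2 * k * l + k + l" using N by (simp add: compatible_def)
    then have "(N (int n) + k) div ?K \<le> (2 * k + l * ?K) div ?K"
      using K by (intro zdiv_mono1) (auto simp: algebra_simps)
    then show ?thesis using G[of "int n"] k by (simp add: div_pos_pos_trivial)
  qed
  moreover have "\<forall>q. q \<notin> {1..int n} \<longrightarrow> G q = 0"
    using XG by (auto simp: uncombine_def)
  ultimately show ?thesis using XG by (simp add: compatible_def)
qed

lemma combine_bij:
  assumes k: "0 \<le> k"
  shows "bij_betw (combine k) (SIGMA x:bounded_fns n k. compatible n l (descent_set n x))
           (compatible n (2 * k * l + k + l) {})"
proof (rule bij_betw_byWitness[where f' = "uncombine n k"])
  show "\<forall>a\<in>(SIGMA x:bounded_fns n k. compatible n l (descent_set n x)).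
      uncombine n k (combine k a) = a"
  proof clarify
    fix x g assume x: "x \<in> bounded_fns n k" and "g \<in> compatible n l (descent_set n x)"
    then show "uncombine n k (combine k (x, g)) = (x, g)"
      using balanced_digit_div_mod[of "x _" k] compatible_zero
      by (auto simp: uncombine_def combine_def fun_eq_iff bounded_fns_def add.assoc)
  qed
  show "\<forall>N\<in>compatible n (2 * k * l + k + l) {}. combine k (uncombine n k N) = N"
  proof (intro ballI ext)
    fix N q assume N: "N \<in> compatible n (2 * k * l + k + l) {}"
    show "combine k (uncombine n k N) q = N q"
    proof (cases "q \<in> {1..int n}")
      case True
      then show ?thesis unfolding combine_def uncombine_def
        using div_mult_mod_eq[of "N q + k" "2 * k + 1"] by (simp add: algebra_simps)
    qed (use compatible_zero[OF N] in \<open>auto simp: combine_def uncombine_def\<close>)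
  qed
  show "uncombine n k ` compatible n (2 * k * l + k + l) {}
      \<subseteq> (SIGMA x:bounded_fns n k. compatible n l (descent_set n x))"
    using uncombine_in[OF k] by blast
qed (use combine_compatible[OF k] in auto)

section \<open>The two-sided generating identity\<close>

lemma chain_count_des:
  "w \<in> signed_perms n \<Longrightarrow>
     chain_count n (k - int (des n w)) = int (card (compatible n k (descent_set n w)))"
  using card_compatible[OF descent_set_subset] des_eq_card_descent_set by simp

lemma sum_chain_count_des_inv_des:
  assumes k: "0 \<le> k"
  shows "(\<Sum>w\<in>signed_perms n.
            chain_count n (k - int (des n w)) * chain_count n (l - int (des n (inv w))))
         = chain_count n (2 * k * l + k + l)"
proof -
  let ?C = "\<lambda>x. int (card (compatible n l (descent_set n x)))"
  have "(\<Sum>w\<in>signed_perms n.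
          chain_count n (k - int (des n w)) * chain_count n (l - int (des n (inv w))))
      = (\<Sum>w\<in>signed_perms n. \<Sum>f\<in>compatible n k (descent_set n w). ?C (inv w))"
    by (simp add: chain_count_des signed_perms_inv)
  also have "\<dots> = (\<Sum>(w, f)\<in>perm_compat n k. ?C (scatter n (w, f)))"
    unfolding perm_compat_def
    by (subst sum.Sigma) (auto simp: finite_signed_perms finite_compatible descent_set_inv_eq
        perm_compat_def intro!: sum.cong)
  also have "\<dots> = (\<Sum>x\<in>bounded_fns n k. ?C x)"
    using sum.reindex_bij_betw[OF scatter_bij, of ?C] by (simp add: case_prod_beta')
  also have "\<dots> = int (card (SIGMA x:bounded_fns n k. compatible n l (descent_set n x)))"
  proof -
    have "finite (perm_compat n k)"
      unfolding perm_compat_def by (intro finite_SigmaI finite_signed_perms finite_compatible)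
    then have "finite (bounded_fns n k)" using bij_betw_finite[OF scatter_bij] by blast
    then show ?thesis by (simp add: card_SigmaI finite_compatible)
  qed
  also have "\<dots> = chain_count n (2 * k * l + k + l)"
    using bij_betw_same_card[OF combine_bij[OF k]] card_compatible_empty by simp
  finally show ?thesis .
qed

lemma Bnum_eq_0:
  assumes "i < 0 \<or> int n < i \<or> j < 0 \<or> int n < j"
  shows "Bnum n i j = 0"
proof -
  have "{w \<in> signed_perms n. int (des n w) = i \<and> int (des n (inv w)) = j} = {}"
    using assms des_le signed_perms_inv by fastforce
  then show ?thesis unfolding Bnum_def by (simp only: card.empty of_nat_0)
qed

lemma Bnum_generating_identity:
  assumes K: "int n \<le> K" and k: "0 \<le> k"
  shows "(\<Sum>i\<in>{0..K}. \<Sum>j\<in>{0..K}. Bnum n i j * (chain_count n (k - i) * chain_count n (l - j)))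
         = chain_count n (2 * k * l + k + l)"
proof -
  let ?S = "signed_perms n"
  let ?g = "\<lambda>w. (int (des n w), int (des n (inv w)))"
  let ?f = "\<lambda>(i, j). chain_count n (k - i) * chain_count n (l - j)"
  have "chain_count n (2 * k * l + k + l) = (\<Sum>w\<in>?S. ?f (?g w))"
    using sum_chain_count_des_inv_des[OF k] by simp
  also have "\<dots> = (\<Sum>y\<in>{0..K} \<times> {0..K}. of_nat (card {w \<in> ?S. ?g w = y}) * ?f y)"
    by (rule sum_fun_comp) (use finite_signed_perms des_le signed_perms_inv K in fastforce)+
  also have "\<dots> = (\<Sum>i\<in>{0..K}. \<Sum>j\<in>{0..K}.
      Bnum n i j * (chain_count n (k - i) * chain_count n (l - j)))"
    unfolding sum.cartesian_product Bnum_def by (intro sum.cong refl) auto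
  finally show ?thesis by simp
qed

section \<open>Extracting the recurrence\<close>

lemma chain_count_neg: "t < 0 \<Longrightarrow> chain_count n t = 0"
  by (simp add: chain_count_def)

lemma chain_count_0: "chain_count n 0 = 1"
  by (simp add: chain_count_def)

lemma chain_count_Suc_diff: "chain_count (Suc m) t - chain_count (Suc m) (t - 1) = chain_count m t"
proof (cases "t < 1")
  case True
  then show ?thesis by (cases "t = 0") (simp_all add: chain_count_def)
next
  case False
  then have "nat t = Suc (nat (t - 1))" by simp
  then show ?thesis using False by (simp add: chain_count_def)
qed

lemma chain_count_Suc_mult:
  assumes "0 \<le> t"
  shows "(t + int (Suc m)) * chain_count m t = int (Suc m) * chain_count (Suc m) t"
proof -
  obtain s where t: "t = int s" using assms by (metis nonneg_int_cases)
  have "Suc (s + m) * ((s + m) choose m) = (Suc (s + m) choose Suc m) * Suc m"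
    by (rule Suc_times_binomial_eq)
  then have "int (Suc (s + m)) * int ((s + m) choose m) =
      int (Suc m) * int (Suc (s + m) choose Suc m)"
    by (metis of_nat_mult mult.commute)
  then show ?thesis unfolding t chain_count_def by (simp add: algebra_simps del: binomial_Suc_Suc)
qed

lemma chain_count_mult_pred: "t * chain_count m t = int (Suc m) * chain_count (Suc m) (t - 1)"
proof (cases "t < 0")
  case False
  then have "(t + int (Suc m)) * chain_count m t = int (Suc m) * chain_count (Suc m) t"
    using chain_count_Suc_mult by simp
  then show ?thesis using chain_count_Suc_diff[of m t] by (simp add: algebra_simps)
qed (simp add: chain_count_neg)

text \<open>Follows from the Pascal rule c_m(t) = c_(m+1)(t) - c_(m+1)(t-1) and from
  t c_m(t) = (m+1) c_(m+1)(t-1), where c = chain_count.\<close>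

lemma chain_count_product_expand:
  fixes i j k l :: int and m :: nat
  defines "n \<equiv> Suc m" and "\<phi> \<equiv> \<lambda>i j. chain_count (Suc m) (k - i) * chain_count (Suc m) (l - j)"
  shows "(2 * k * l + k + l + int n) * (chain_count m (k - i) * chain_count m (l - j)) =
      (int n + i + j + 2 * i * j) * \<phi> i j
    + (1 - (i + 1) + (2 * int n + 1) * j - 2 * (i + 1) * j) * \<phi> (i + 1) j
    + (1 - (j + 1) + (2 * int n + 1) * i - 2 * i * (j + 1)) * \<phi> i (j + 1)
    + (int n * (2 * int n + 3) - (2 * int n + 1) * (i + 1) - (2 * int n + 1) * (j + 1)
        + 2 * (i + 1) * (j + 1)) * \<phi> (i + 1) (j + 1)"
proof -
  define a e where "a = k - i" and "e = l - j"
  have x: "chain_count m a = chain_count n a - chain_count n (a - 1)"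
    and y: "chain_count m e = chain_count n e - chain_count n (e - 1)"
    using chain_count_Suc_diff unfolding n_def by metis+
  have ax: "a * chain_count m a = int n * chain_count n (a - 1)"
    and ey: "e * chain_count m e = int n * chain_count n (e - 1)"
    using chain_count_mult_pred unfolding n_def by metis+
  have "(2 * k * l + k + l + int n) * (chain_count m a * chain_count m e)
      = 2 * (a * chain_count m a) * (e * chain_count m e)
        + (2 * j + 1) * (a * chain_count m a) * chain_count m e
        + (2 * i + 1) * chain_count m a * (e * chain_count m e)
        + (2 * i * j + i + j + int n) * chain_count m a * chain_count m e"
    by (simp add: a_def e_def algebra_simps)
  also have "\<dots> = 2 * (int n * chain_count n (a - 1)) * (int n * chain_count n (e - 1))
      + (2 * j + 1) * (int n * chain_count n (a - 1)) * (chain_count n e - chain_count n (e - 1))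
      + (2 * i + 1) * (chain_count n a - chain_count n (a - 1)) * (int n * chain_count n (e - 1))
      + (2 * i * j + i + j + int n) * (chain_count n a - chain_count n (a - 1))
          * (chain_count n e - chain_count n (e - 1))"
    unfolding ax ey unfolding x y ..
  finally show ?thesis unfolding \<phi>_def a_def e_def n_def by (simp add: algebra_simps)
qed

lemma sum_int_shift:
  fixes f :: "int \<Rightarrow> 'a::comm_monoid_add"
  assumes "f 0 = 0" "f (K + 1) = 0" "0 \<le> K"
  shows "(\<Sum>i\<in>{0..K}. f (i + 1)) = (\<Sum>i\<in>{0..K}. f i)"
proof -
  have im: "(\<lambda>i. i + 1) ` {0..K} = {1..K + 1}"
    by (auto intro!: image_eqI[of _ _ "_ - 1"])
  have "(\<Sum>i\<in>{0..K}. f (i + 1)) = (\<Sum>i\<in>{1..K + 1}. f i)"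
    unfolding im[symmetric] by (subst sum.reindex) (auto simp: inj_on_def)
  also have "{1..K + 1} = insert (K + 1) {1..K}" and "{0..K} = insert 0 {1..K}"
    using assms(3) by auto
  then have "(\<Sum>i\<in>{1..K + 1}. f i) = (\<Sum>i\<in>{0..K}. f i)"
    using assms(1,2) by simp
  finally show ?thesis .
qed

lemma double_sum_shift:
  fixes g \<phi> :: "int \<Rightarrow> int \<Rightarrow> 'a::comm_ring"
  assumes g: "\<And>i j. \<not> (0 \<le> i \<and> i < K \<and> 0 \<le> j \<and> j < K) \<Longrightarrow> g i j = 0"
    and K: "0 \<le> K" and ab: "a \<in> {0, 1}" "b \<in> {0, 1}"
  shows "(\<Sum>i\<in>{0..K}. \<Sum>j\<in>{0..K}. g i j * \<phi> (i + a) (j + b))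
       = (\<Sum>i\<in>{0..K}. \<Sum>j\<in>{0..K}. g (i - a) (j - b) * \<phi> i j)"
proof -
  have inner: "(\<Sum>j\<in>{0..K}. g i j * \<phi> x (j + b)) = (\<Sum>j\<in>{0..K}. g i (j - b) * \<phi> x j)" for i x
    using ab(2) sum_int_shift[of "\<lambda>j. g i (j - 1) * \<phi> x j" K] g K by auto
  have outer: "(\<Sum>i\<in>{0..K}. G i (i + a)) = (\<Sum>i\<in>{0..K}. G (i - a) i)"
    if "\<And>i x. \<not> (0 \<le> i \<and> i < K) \<Longrightarrow> G i x = 0" for G :: "int \<Rightarrow> int \<Rightarrow> 'a"
    using ab(1) sum_int_shift[of "\<lambda>i. G (i - 1) i" K] that K by auto
  show ?thesis
    unfolding inner
    by (rule outer[where G = "\<lambda>i x. \<Sum>j\<in>{0..K}. g i (j - b) * \<phi> x j"]) (use g in auto)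
qed

definition rec_rhs :: "nat \<Rightarrow> (int \<Rightarrow> int \<Rightarrow> int) \<Rightarrow> int \<Rightarrow> int \<Rightarrow> int" where
  "rec_rhs n b i j =
      (int n + i + j + 2*i*j) * b i j
    + (1 - i + (2 * int n + 1) * j - 2*i*j) * b (i - 1) j
    + (1 - j + (2 * int n + 1) * i - 2*i*j) * b i (j - 1)
    + (int n * (2 * int n + 3) - (2 * int n + 1) * i - (2 * int n + 1) * j + 2*i*j)
        * b (i - 1) (j - 1)"

lemma rec_rhs_transform:
  fixes b :: "int \<Rightarrow> int \<Rightarrow> int" and m :: nat
  defines "n \<equiv> Suc m"
  assumes b: "\<And>i j. \<not> (0 \<le> i \<and> i < K \<and> 0 \<le> j \<and> j < K) \<Longrightarrow> b i j = 0" and K: "0 \<le> K"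
  shows "(2 * k * l + k + l + int n) *
           (\<Sum>i\<in>{0..K}. \<Sum>j\<in>{0..K}. b i j * (chain_count m (k - i) * chain_count m (l - j)))
       = (\<Sum>i\<in>{0..K}. \<Sum>j\<in>{0..K}. rec_rhs n b i j * (chain_count n (k - i) * chain_count n (l - j)))"
proof -
  define \<phi> where "\<phi> i j = chain_count n (k - i) * chain_count n (l - j)" for i j
  define A0 A1 A2 A3 where
    "A0 i j = int n + i + j + 2 * i * j" and
    "A1 i j = 1 - i + (2 * int n + 1) * j - 2 * i * j" and
    "A2 i j = 1 - j + (2 * int n + 1) * i - 2 * i * j" and
    "A3 i j = int n * (2 * int n + 3) - (2 * int n + 1) * i - (2 * int n + 1) * j + 2 * i * j"
    for i j :: int
  let ?S = "\<lambda>F. \<Sum>i\<in>{0..K}. \<Sum>j\<in>{0..K}. F i j"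
  have pw: "(2 * k * l + k + l + int n) * (chain_count m (k - i) * chain_count m (l - j)) =
      A0 i j * \<phi> i j + A1 (i + 1) j * \<phi> (i + 1) j + A2 i (j + 1) * \<phi> i (j + 1)
      + A3 (i + 1) (j + 1) * \<phi> (i + 1) (j + 1)" for i j
    unfolding A0_def A1_def A2_def A3_def \<phi>_def n_def by (rule chain_count_product_expand)
  have shift: "?S (\<lambda>i j. g i j * \<phi> (i + a) (j + c)) = ?S (\<lambda>i j. g (i - a) (j - c) * \<phi> i j)"
    if "a \<in> {0, 1}" "c \<in> {0, 1}" "\<And>i j. \<not> (0 \<le> i \<and> i < K \<and> 0 \<le> j \<and> j < K) \<Longrightarrow> g i j = 0"
    for g :: "int \<Rightarrow> int \<Rightarrow> int" and a c
    by (rule double_sum_shift[OF that(3) K that(1,2)])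
  have "(2 * k * l + k + l + int n) *
          ?S (\<lambda>i j. b i j * (chain_count m (k - i) * chain_count m (l - j)))
      = ?S (\<lambda>i j. b i j * A0 i j * \<phi> i j) + ?S (\<lambda>i j. b i j * A1 (i + 1) j * \<phi> (i + 1) (j + 0))
        + ?S (\<lambda>i j. b i j * A2 i (j + 1) * \<phi> (i + 0) (j + 1))
        + ?S (\<lambda>i j. b i j * A3 (i + 1) (j + 1) * \<phi> (i + 1) (j + 1))"
    unfolding sum_distrib_left sum.distrib[symmetric]
    by (intro sum.cong refl) (subst mult.left_commute, subst pw, simp add: distrib_left mult.assoc)
  also have "\<dots> = ?S (\<lambda>i j. b i j * A0 i j * \<phi> i j) + ?S (\<lambda>i j. b (i - 1) j * A1 i j * \<phi> i j)
        + ?S (\<lambda>i j. b i (j - 1) * A2 i j * \<phi> i j) + ?S (\<lambda>i j. b (i - 1) (j - 1) * A3 i j * \<phi> i j)"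
    using shift[of 1 0 "\<lambda>i j. b i j * A1 (i + 1) j"] shift[of 0 1 "\<lambda>i j. b i j * A2 i (j + 1)"]
      shift[of 1 1 "\<lambda>i j. b i j * A3 (i + 1) (j + 1)"] b
    by simp
  also have "\<dots> = ?S (\<lambda>i j. rec_rhs n b i j * \<phi> i j)"
    unfolding sum.distrib[symmetric] rec_rhs_def A0_def A1_def A2_def A3_def
    by (intro sum.cong refl) (simp add: algebra_simps)
  finally show ?thesis unfolding \<phi>_def .
qed

text \<open>The chain counts c(t) vanish for t < 0 and c(0) = 1, so the double sums are unitriangular in
  the coefficients: the coefficient at (i, j) is the sum at (k, l) = (i, j) minus terms with
  smaller i + j.\<close>

lemma double_sum_coeffs_eq_0:
  fixes d :: "int \<Rightarrow> int \<Rightarrow> int" and c :: "int \<Rightarrow> int"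
  assumes c_neg: "\<And>t. t < 0 \<Longrightarrow> c t = 0" and c_0: "c 0 = 1"
    and sums: "\<And>k l. 0 \<le> k \<Longrightarrow> 0 \<le> l \<Longrightarrow> (\<Sum>i\<in>{0..K}. \<Sum>j\<in>{0..K}. d i j * (c (k - i) * c (l - j))) = 0"
  shows "0 \<le> i \<Longrightarrow> i \<le> K \<Longrightarrow> 0 \<le> j \<Longrightarrow> j \<le> K \<Longrightarrow> d i j = 0"
proof (induction "nat (i + j)" arbitrary: i j rule: less_induct)
  case less
  have coeff: "d i' j' * (c (i - i') * c (j - j')) = (if i' = i \<and> j' = j then d i j else 0)"
    if "i' \<in> {0..K}" "j' \<in> {0..K}" for i' j'
  proof (cases "i < i' \<or> j < j'")
    case False
    show ?thesis
    proof (cases "i' = i \<and> j' = j")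
      case neq: False
      then have "nat (i' + j') < nat (i + j)" using False that by auto
      then have "d i' j' = 0" using less.hyps[of i' j'] that by auto
      then show ?thesis using neq by auto
    qed (simp add: c_0)
  qed (use c_neg in auto)
  have "0 = (\<Sum>i'\<in>{0..K}. \<Sum>j'\<in>{0..K}. d i' j' * (c (i - i') * c (j - j')))"
    using sums[of i j] less.prems by simp
  also have "\<dots> = (\<Sum>i'\<in>{0..K}. \<Sum>j'\<in>{0..K}. if i' = i \<and> j' = j then d i j else 0)"
    using coeff by (intro sum.cong refl) auto
  also have "\<dots> = (\<Sum>i'\<in>{0..K}. if i' = i then d i j else 0)"
    using less.prems
    by (intro sum.cong refl) (simp add: sum.delta' if_distrib[of "\<lambda>P. P \<and> _"])
  also have "\<dots> = d i j"
    using less.prems by (simp add: sum.delta')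
  finally show ?case by simp
qed

lemma Bnum_support:
  "\<not> (0 \<le> i \<and> i < int (Suc m) \<and> 0 \<le> j \<and> j < int (Suc m)) \<Longrightarrow> Bnum m i j = 0"
  using Bnum_eq_0[of i m j] by auto

lemma Bnum_double_sum_recurrence:
  fixes m :: nat
  defines "n \<equiv> Suc m"
  assumes k: "0 \<le> k" and l: "0 \<le> l"
  shows "(\<Sum>i\<in>{0..int n}. \<Sum>j\<in>{0..int n}.
           int n * Bnum n i j * (chain_count n (k - i) * chain_count n (l - j)))
       = (\<Sum>i\<in>{0..int n}. \<Sum>j\<in>{0..int n}.
           rec_rhs n (Bnum m) i j * (chain_count n (k - i) * chain_count n (l - j)))"
proof -
  let ?M = "2 * k * l + k + l" and ?c = "chain_count n"
  have "(\<Sum>i\<in>{0..int n}. \<Sum>j\<in>{0..int n}. int n * Bnum n i j * (?c (k - i) * ?c (l - j)))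
      = int n * (\<Sum>i\<in>{0..int n}. \<Sum>j\<in>{0..int n}. Bnum n i j * (?c (k - i) * ?c (l - j)))"
    by (simp add: sum_distrib_left mult.assoc)
  also have "\<dots> = int n * ?c ?M"
    using Bnum_generating_identity[of n "int n" k l] k by simp
  also have "\<dots> = (?M + int n) * chain_count m ?M"
    using chain_count_Suc_mult[of ?M m] k l by (simp add: n_def)
  also have "\<dots> = (?M + int n) * (\<Sum>i\<in>{0..int n}. \<Sum>j\<in>{0..int n}.
      Bnum m i j * (chain_count m (k - i) * chain_count m (l - j)))"
    using Bnum_generating_identity[of m "int n" k l] k by (simp add: n_def)
  also have "\<dots> = (\<Sum>i\<in>{0..int n}. \<Sum>j\<in>{0..int n}. rec_rhs n (Bnum m) i j * (?c (k - i) * ?c (l - j)))"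
    using rec_rhs_transform[OF Bnum_support] by (simp add: n_def)
  finally show ?thesis .
qed

lemma Bnum_recurrence:
  assumes n: "1 \<le> n"
  shows "int n * Bnum n i j = rec_rhs n (Bnum (n - 1)) i j"
proof -
  obtain m where m: "n = Suc m" using n by (cases n) auto
  show ?thesis
  proof (cases "0 \<le> i \<and> i \<le> int n \<and> 0 \<le> j \<and> j \<le> int n")
    case True
    let ?d = "\<lambda>i j. int n * Bnum n i j - rec_rhs n (Bnum m) i j"
    have "(\<Sum>i\<in>{0..int n}. \<Sum>j\<in>{0..int n}. ?d i j * (chain_count n (k - i) * chain_count n (l - j))) = 0"
      if "0 \<le> k" "0 \<le> l" for k l
      using Bnum_double_sum_recurrence[OF that, of m] m by (simp add: left_diff_distrib sum_subtractf)
    then have "?d i j = 0"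
      using double_sum_coeffs_eq_0[where c = "chain_count n" and K = "int n" and d = ?d,
          OF chain_count_neg chain_count_0] True
      by auto
    then show ?thesis using m by simp
  next
    case False
    then show ?thesis
      using m Bnum_eq_0[of i n j] Bnum_support[of i m j] Bnum_support[of "i - 1" m j]
        Bnum_support[of i m "j - 1"] Bnum_support[of "i - 1" m "j - 1"]
      by (auto simp: rec_rhs_def)
  qed
qed

theorem lemma3p7:
  fixes n :: nat and i j :: int
  assumes "n \<ge> 1"
  shows "int n * Bnum n i j =
      (int n + i + j + 2*i*j) * Bnum (n - 1) i j
    + (1 - i + (2 * int n + 1) * j - 2*i*j) * Bnum (n - 1) (i - 1) j
    + (1 - j + (2 * int n + 1) * i - 2*i*j) * Bnum (n - 1) i (j - 1)
    + (int n * (2 * int n + 3) - (2 * int n + 1) * i - (2 * int n + 1) * j + 2*i*j)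
        * Bnum (n - 1) (i - 1) (j - 1)"
  using Bnum_recurrence[OF assms] unfolding rec_rhs_def .

end
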